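(* Let $N,K\ge 2$ ... more precisely, let $N\ge1$, $K\ge 1$, and let $\mathcal{P}$ be a probability distribution on pairs $(a_h,f_h)\in\mathcal{A}\times\mathcal{F}\subseteq\mathbb{R}^N\times\mathbb{R}^N$. For each $(a_h,f_h)$ let $\mathcal{L}_h^a\in\mathbb{R}^{N\times N}$ be the associated linear discrete operator, let $u_h=\mathcal{G}_h(a_h,f_h)$ be the discrete solution (a measurable function of $(a_h,f_h)$), and let $u_h^{(t)}=U_t(a_h,f_h)\in\mathcal{U}$ be the current iterate, a fixed measurable function of $(a_h,f_h)$. Let $C_1,\dots,C_K:\mathbb{R}^N\to\mathbb{R}^N$ be arbitrary (measurable) solver maps and set $$\tilde c_j=\tilde c_j(a_h,u_h^{(t)},u_h)=\bigl\|(I-C_j\circ\mathcal{L}_h^a)(u_h-u_h^{(t)})\bigr\|_2^2,\quad j\in[K].$$ Assume there are constants $0<E_{\min}$ and $\bar E<\infty$ such that, for $\mathcal{P}$-almost every $(a_h,f_h)$, $\tilde c_j<\bar E$ for all $j\in[K]$ and $\tilde c_j>E_{\min}$ for at least one $j\in[K]$. Then $\Psi$ is a Bayes-consistent surrogate for $l_{\text{route}}$: for every sequence of measurable score functions $\mathbf g_n=(g_{n,1},\dots,g_{n,K})$ with $\mathcal{R}_\Psi(\mathbf g_n)\to\mathcal{R}_\Psi^*$, the induced routers $r_n=\operatorname{argmax}_{j\in[K]}g_{n,j}$ satisfy $\mathcal{R}_{\text{route}}(r_n)\to\mathcal{R}_{\text{route}}^*$.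
   Context: Inputs are $x=(a_h,f_h,u_h^{(t)})\in\mathcal{A}\times\mathcal{F}\times\mathcal{U}$. A score function is $\mathbf g=(g_1,\dots,g_K)$ with $g_j:\mathcal{A}\times\mathcal{F}\times\mathcal{U}\to\mathbb{R}$; its induced router is $r(x)=\operatorname{argmax}_{j\in[K]}g_j(x)$ (ties broken by any fixed rule). The routing loss is $l_{\text{route}}(r,a_h,f_h,u_h^{(t)},u_h)=\sum_{j=1}^K\tilde c_j\,\mathbf 1_{r(a_h,f_h,u_h^{(t)})=j}$, and the surrogate loss is $$\Psi(\mathbf g,a_h,f_h,u_h^{(t)},u_h)=-\sum_{j=1}^K\sum_{k=1}^K\tilde c_k\,\mathbf 1_{k\ne j}\log\left(\frac{\exp(g_j(a_h,f_h,u_h^{(t)}))}{\sum_{m=1}^K\exp(g_m(a_h,f_h,u_h^{(t)}))}\right).$$ Risks: $\mathcal{R}_{\text{route}}(r)=\mathbb{E}_{(a_h,f_h)\sim\mathcal{P}}[l_{\text{route}}(r,a_h,f_h,u_h^{(t)},u_h)]$ and $\mathcal{R}_\Psi(\mathbf g)=\mathbb{E}_{(a_h,f_h)\sim\mathcal{P}}[\Psi(\mathbf g,a_h,f_h,u_h^{(t)},u_h)]$, with $u_h^{(t)}=U_t(a_h,f_h)$ and $u_h=\mathcal{G}_h(a_h,f_h)$; $\mathcal{R}_{\text{route}}^*$ and $\mathcal{R}_\Psi^*$ denote the infima of these risks over all measurable routers, resp. all measurable score functions. *)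

theory Defs
  imports "HOL-Probability.Probability"
begin

text \<open>Samples are pairs (a_h, f_h) in R^N x R^N; router/score inputs are
  triples (a_h, f_h, u_h^(t)) in R^N x R^N x R^N. Expert indices are 0..K-1.\<close>

type_synonym 'n input = "(real^'n) \<times> (real^'n) \<times> (real^'n)"

definition expert_cost ::
  "(real^'n \<Rightarrow> real^'n^'n) \<Rightarrow> ((real^'n) \<times> (real^'n) \<Rightarrow> real^'n) \<Rightarrow>
   ((real^'n) \<times> (real^'n) \<Rightarrow> real^'n) \<Rightarrow> (nat \<Rightarrow> real^'n \<Rightarrow> real^'n) \<Rightarrow>
   nat \<Rightarrow> (real^'n) \<times> (real^'n) \<Rightarrow> real" where
  "expert_cost L G Ut C j \<omega> =
     (let e = G \<omega> - Ut \<omega> in (norm (e - C j (L (fst \<omega>) *v e)))\<^sup>2)"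

text \<open>Router induced by a score function: argmax with a fixed tie-breaking rule tb
  (tb picks an element of the nonempty set of maximisers).\<close>
definition induced_router ::
  "(nat set \<Rightarrow> nat) \<Rightarrow> nat \<Rightarrow> (nat \<Rightarrow> 'x \<Rightarrow> real) \<Rightarrow> 'x \<Rightarrow> nat" where
  "induced_router tb K g x = tb {j. j < K \<and> (\<forall>k<K. g k x \<le> g j x)}"

definition route_loss :: "nat \<Rightarrow> (nat \<Rightarrow> real) \<Rightarrow> nat \<Rightarrow> real" where
  "route_loss K c r = (\<Sum>j<K. c j * (if r = j then 1 else 0))"

definition surrogate_loss :: "nat \<Rightarrow> (nat \<Rightarrow> real) \<Rightarrow> (nat \<Rightarrow> real) \<Rightarrow> real" where
  "surrogate_loss K c gv =
     - (\<Sum>j<K. \<Sum>k<K. c k * (if k \<noteq> j then 1 else 0) *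
          ln (exp (gv j) / (\<Sum>m<K. exp (gv m))))"

definition route_risk ::
  "((real^'n) \<times> (real^'n)) measure \<Rightarrow> nat \<Rightarrow> (nat \<Rightarrow> (real^'n) \<times> (real^'n) \<Rightarrow> real) \<Rightarrow>
   ((real^'n) \<times> (real^'n) \<Rightarrow> real^'n) \<Rightarrow> ('n input \<Rightarrow> nat) \<Rightarrow> ennreal" where
  "route_risk M K c Ut r =
     (\<integral>\<^sup>+ \<omega>. ennreal (route_loss K (\<lambda>j. c j \<omega>) (r (fst \<omega>, snd \<omega>, Ut \<omega>))) \<partial>M)"

definition surrogate_risk ::
  "((real^'n) \<times> (real^'n)) measure \<Rightarrow> nat \<Rightarrow> (nat \<Rightarrow> (real^'n) \<times> (real^'n) \<Rightarrow> real) \<Rightarrow>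
   ((real^'n) \<times> (real^'n) \<Rightarrow> real^'n) \<Rightarrow> (nat \<Rightarrow> 'n input \<Rightarrow> real) \<Rightarrow> ennreal" where
  "surrogate_risk M K c Ut g =
     (\<integral>\<^sup>+ \<omega>. ennreal (surrogate_loss K (\<lambda>j. c j \<omega>) (\<lambda>j. g j (fst \<omega>, snd \<omega>, Ut \<omega>))) \<partial>M)"

definition route_risk_star ::
  "((real^'n) \<times> (real^'n)) measure \<Rightarrow> nat \<Rightarrow> (nat \<Rightarrow> (real^'n) \<times> (real^'n) \<Rightarrow> real) \<Rightarrow>
   ((real^'n) \<times> (real^'n) \<Rightarrow> real^'n) \<Rightarrow> ennreal" where
  "route_risk_star M K c Ut =
     (INF r \<in> {r :: 'n input \<Rightarrow> nat. r \<in> borel \<rightarrow>\<^sub>M count_space UNIV \<and> (\<forall>x. r x < K)}.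
        route_risk M K c Ut r)"

definition surrogate_risk_star ::
  "((real^'n) \<times> (real^'n)) measure \<Rightarrow> nat \<Rightarrow> (nat \<Rightarrow> (real^'n) \<times> (real^'n) \<Rightarrow> real) \<Rightarrow>
   ((real^'n) \<times> (real^'n) \<Rightarrow> real^'n) \<Rightarrow> ennreal" where
  "surrogate_risk_star M K c Ut =
     (INF g \<in> {g :: nat \<Rightarrow> 'n input \<Rightarrow> real. \<forall>j<K. g j \<in> borel_measurable borel}.
        surrogate_risk M K c Ut g)"

end

theory Submission
  imports Defs
begin

text \<open>The surrogate is a weighted cross entropy: with \<open>w\<^sub>j = \<Sum>\<^sub>k\<^sub>\<noteq>\<^sub>j c\<^sub>k\<close> and
  \<open>W = \<Sum>\<^sub>j w\<^sub>j\<close> it equals \<open>\<Sum>\<^sub>j w\<^sub>j (- log p\<^sub>j)\<close> for the softmax \<open>p\<close> of the scores.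
  Its infimum over the scores is \<open>H = \<Sum>\<^sub>j w\<^sub>j log (W / w\<^sub>j)\<close>, and the excess over \<open>H\<close> dominates
  the squared Hellinger distance between \<open>w\<close> and \<open>W p\<close>. If the argmax router picks \<open>i\<close> although
  \<open>j\<close> is cheaper, then \<open>p\<^sub>i \<ge> p\<^sub>j\<close> but \<open>w\<^sub>i \<le> w\<^sub>j\<close>, which forces
  \<open>(c\<^sub>i - c\<^sub>j)\<^sup>2 \<le> 8 W (\<Psi> - H)\<close>. As the costs are bounded, so is \<open>W\<close>, and for every \<open>\<epsilon> > 0\<close> the excess
  routing risk is at most \<open>\<epsilon>\<close> plus a multiple of the excess surrogate risk; hence it vanishes
  along any minimising sequence of score functions.\<close>

section \<open>The surrogate loss at a single sample\<close>

definition surrogate_weight :: "nat \<Rightarrow> (nat \<Rightarrow> real) \<Rightarrow> nat \<Rightarrow> real" where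
  "surrogate_weight K c j = (\<Sum>k<K. c k) - c j"

definition surrogate_weight_sum :: "nat \<Rightarrow> (nat \<Rightarrow> real) \<Rightarrow> real" where
  "surrogate_weight_sum K c = (\<Sum>j<K. surrogate_weight K c j)"

text \<open>The infimum of the surrogate loss over all scores: it is approached by scores whose softmax is
  proportional to the weights, see \<open>surrogate_loss_ln_weight_le\<close>.\<close>
definition surrogate_loss_inf :: "nat \<Rightarrow> (nat \<Rightarrow> real) \<Rightarrow> real" where
  "surrogate_loss_inf K c =
     (\<Sum>j<K. surrogate_weight K c j * ln (surrogate_weight_sum K c / surrogate_weight K c j))"

lemma surrogate_weight_nonneg:
  assumes "\<forall>k<K. 0 \<le> c k" "j < K"
  shows "0 \<le> surrogate_weight K c j"
  using member_le_sum[of j "{..<K}" c] assms by (simp add: surrogate_weight_def)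

lemma surrogate_weight_le_sum:
  assumes "\<forall>k<K. 0 \<le> c k" "j < K"
  shows "surrogate_weight K c j \<le> surrogate_weight_sum K c"
  unfolding surrogate_weight_sum_def using assms
  by (intro member_le_sum) (auto intro: surrogate_weight_nonneg)

lemma surrogate_weight_sum_nonneg:
  assumes "\<forall>k<K. 0 \<le> c k"
  shows "0 \<le> surrogate_weight_sum K c"
  unfolding surrogate_weight_sum_def using assms
  by (intro sum_nonneg) (auto intro: surrogate_weight_nonneg)

lemma surrogate_weight_sum_le:
  assumes "\<forall>k<K. 0 \<le> c k" and "\<forall>k<K. c k \<le> E"
  shows "surrogate_weight_sum K c \<le> real K * (real K * E)"
proof -
  have "(\<Sum>k<K. c k) \<le> real K * E"
    using sum_bounded_above[of "{..<K}" c E] assms(2) by auto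
  then have "surrogate_weight K c j \<le> real K * E" if "j < K" for j
    using assms(1)[rule_format, OF that] by (simp add: surrogate_weight_def)
  then show ?thesis
    using sum_bounded_above[of "{..<K}" "surrogate_weight K c" "real K * E"]
    by (simp add: surrogate_weight_sum_def)
qed

definition softmax :: "nat \<Rightarrow> (nat \<Rightarrow> real) \<Rightarrow> nat \<Rightarrow> real" where
  "softmax K v j = exp (v j) / (\<Sum>m<K. exp (v m))"

lemma softmax_pos: "j < K \<Longrightarrow> 0 < softmax K v j"
  unfolding softmax_def by (intro divide_pos_pos sum_pos) auto

lemma sum_softmax: "K \<ge> 1 \<Longrightarrow> (\<Sum>j<K. softmax K v j) = 1"
  unfolding softmax_def sum_divide_distrib[symmetric]
  by (intro divide_self sum_pos[THEN less_imp_neq, symmetric]) (auto simp: lessThan_empty_iff)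

lemma surrogate_loss_eq: "surrogate_loss K c v = - (\<Sum>j<K. surrogate_weight K c j * ln (softmax K v j))"
proof -
  have weight: "(\<Sum>k<K. c k * (if k \<noteq> j then 1 else 0)) = surrogate_weight K c j" if "j < K" for j
  proof -
    have "(\<Sum>k<K. c k * (if k \<noteq> j then 1 else 0)) = (\<Sum>k<K. c k - (if k = j then c k else 0))"
      by (rule sum.cong) auto
    then show ?thesis using that by (simp add: sum_subtractf surrogate_weight_def)
  qed
  show ?thesis
    unfolding surrogate_loss_def softmax_def
    by (simp add: sum_distrib_right[symmetric]) (intro sum.cong refl, simp add: weight)
qed

lemma hellinger_le_mult_ln_divide:
  fixes w t :: real
  assumes "0 \<le> w" "0 < t"
  shows "(sqrt w - sqrt t)\<^sup>2 + w - t \<le> w * ln (w / t)"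
proof (cases "w = 0")
  case True
  then show ?thesis using assms by simp
next
  case False
  then have "0 < w" using assms by simp
  define s where "s = sqrt t / sqrt w"
  have "0 < s" using \<open>0 < w\<close> assms by (simp add: s_def)
  have "ln (w / t) = - ln (s\<^sup>2)"
    using \<open>0 < w\<close> assms by (simp add: s_def power_divide ln_div)
  also have "\<dots> = - 2 * ln s" using \<open>0 < s\<close> by (simp add: ln_realpow)
  finally have "w * ln (w / t) = - 2 * (w * ln s)" by simp
  moreover have "w * ln s \<le> w * (s - 1)"
    using ln_le_minus_one[OF \<open>0 < s\<close>] \<open>0 < w\<close> by (intro mult_left_mono) auto
  moreover have "w * s = sqrt w * sqrt t" using \<open>0 < w\<close> by (simp add: s_def field_simps)
  moreover have "(sqrt w - sqrt t)\<^sup>2 + w - t = 2 * w - 2 * (sqrt w * sqrt t)"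
    using \<open>0 < w\<close> assms by (simp add: power2_eq_square algebra_simps)
  ultimately show ?thesis by (simp add: algebra_simps)
qed

lemma surrogate_excess_ge_hellinger:
  assumes "K \<ge> 1" and c: "\<forall>k<K. 0 \<le> c k"
  shows "(\<Sum>j<K. (sqrt (surrogate_weight K c j) - sqrt (surrogate_weight_sum K c * softmax K v j))\<^sup>2)
           \<le> surrogate_loss K c v - surrogate_loss_inf K c"
proof -
  let ?w = "surrogate_weight K c" and ?W = "surrogate_weight_sum K c" and ?p = "softmax K v"
  have termwise: "(sqrt (?w j) - sqrt (?W * ?p j))\<^sup>2 + ?w j - ?W * ?p j
      \<le> - (?w j * ln (?p j)) - ?w j * ln (?W / ?w j)" if "j < K" for j
  proof (cases "?w j = 0")
    case True
    then show ?thesis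
      using surrogate_weight_sum_nonneg[OF c] softmax_pos[OF that, of v] by (simp add: power2_eq_square)
  next
    case False
    then have "0 < ?w j" using surrogate_weight_nonneg[OF c that] by simp
    moreover have "0 < ?W" using calculation surrogate_weight_le_sum[OF c that] by simp
    moreover note softmax_pos[OF that, of v]
    ultimately have "- (?w j * ln (?p j)) - ?w j * ln (?W / ?w j) = ?w j * ln (?w j / (?W * ?p j))"
      by (simp add: ln_div ln_mult algebra_simps)
    also have "(sqrt (?w j) - sqrt (?W * ?p j))\<^sup>2 + ?w j - ?W * ?p j \<le> \<dots>"
      using \<open>0 < ?w j\<close> \<open>0 < ?W\<close> softmax_pos[OF that]
      by (intro hellinger_le_mult_ln_divide) auto
    finally show ?thesis .
  qed
  have "(\<Sum>j<K. (sqrt (?w j) - sqrt (?W * ?p j))\<^sup>2)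
      = (\<Sum>j<K. (sqrt (?w j) - sqrt (?W * ?p j))\<^sup>2 + ?w j - ?W * ?p j)"
    using sum_softmax[OF \<open>K \<ge> 1\<close>, of v]
    by (simp add: sum.distrib sum_subtractf sum_distrib_left[symmetric] surrogate_weight_sum_def)
  also have "\<dots> \<le> (\<Sum>j<K. - (?w j * ln (?p j)) - ?w j * ln (?W / ?w j))"
    using termwise by (intro sum_mono) auto
  also have "\<dots> = surrogate_loss K c v - surrogate_loss_inf K c"
    by (simp add: surrogate_loss_eq surrogate_loss_inf_def sum_subtractf sum_negf)
  finally show ?thesis .
qed

lemma surrogate_loss_inf_le:
  assumes "K \<ge> 1" "\<forall>k<K. 0 \<le> c k"
  shows "surrogate_loss_inf K c \<le> surrogate_loss K c v"
proof -
  have "0 \<le> (\<Sum>j<K. (sqrt (surrogate_weight K c j) - sqrt (surrogate_weight_sum K c * softmax K v j))\<^sup>2)"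
    by (intro sum_nonneg) simp
  then show ?thesis using surrogate_excess_ge_hellinger[OF assms, of v] by linarith
qed

lemma surrogate_loss_inf_nonneg:
  assumes c: "\<forall>k<K. 0 \<le> c k"
  shows "0 \<le> surrogate_loss_inf K c"
  unfolding surrogate_loss_inf_def
proof (intro sum_nonneg)
  fix j assume "j \<in> {..<K}"
  then have j: "j < K" by simp
  show "0 \<le> surrogate_weight K c j * ln (surrogate_weight_sum K c / surrogate_weight K c j)"
  proof (cases "surrogate_weight K c j = 0")
    case False
    then have "0 < surrogate_weight K c j" using surrogate_weight_nonneg[OF c j] by simp
    then show ?thesis using surrogate_weight_le_sum[OF c j] by simp
  qed simp
qed

lemma surrogate_loss_ln_weight_le:
  assumes "K \<ge> 1" and c: "\<forall>k<K. 0 \<le> c k" and "0 < e"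
  shows "surrogate_loss K c (\<lambda>j. ln (surrogate_weight K c j + e)) \<le> surrogate_loss_inf K c + real K * e"
proof -
  let ?w = "surrogate_weight K c" and ?W = "surrogate_weight_sum K c"
  have exp_ln: "exp (ln (?w j + e)) = ?w j + e" if "j < K" for j
    using surrogate_weight_nonneg[OF c that] \<open>0 < e\<close> by simp
  have softmax: "softmax K (\<lambda>j. ln (?w j + e)) j = (?w j + e) / (?W + real K * e)" if "j < K" for j
    using that exp_ln by (simp add: softmax_def sum.distrib surrogate_weight_sum_def)
  have termwise: "- (?w j * ln ((?w j + e) / (?W + real K * e)))
      \<le> ?w j * ln (?W / ?w j) + ?w j * (real K * e / ?W)" if j: "j < K" for j
  proof (cases "?w j = 0")
    case False
    then have "0 < ?w j" using surrogate_weight_nonneg[OF c j] by simp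
    moreover have "0 < ?W" using calculation surrogate_weight_le_sum[OF c j] by simp
    moreover have "0 < ?W + real K * e" using calculation \<open>0 < e\<close> by (simp add: add_pos_nonneg)
    ultimately have "- ln ((?w j + e) / (?W + real K * e)) \<le> ln (?W / ?w j) + ln ((?W + real K * e) / ?W)"
      using \<open>0 < e\<close> by (simp add: ln_div)
    also have "ln ((?W + real K * e) / ?W) \<le> real K * e / ?W"
      using ln_le_minus_one[of "(?W + real K * e) / ?W"] \<open>0 < ?W\<close> \<open>0 < ?W + real K * e\<close>
      by (simp add: field_simps)
    finally have "- ln ((?w j + e) / (?W + real K * e)) \<le> ln (?W / ?w j) + real K * e / ?W"
      by simp
    from mult_left_mono[OF this, of "?w j"] \<open>0 < ?w j\<close> show ?thesis
      by (simp add: algebra_simps)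
  qed simp
  have "surrogate_loss K c (\<lambda>j. ln (?w j + e))
      = (\<Sum>j<K. - (?w j * ln ((?w j + e) / (?W + real K * e))))"
    by (simp add: surrogate_loss_eq softmax sum_negf)
  also have "\<dots> \<le> (\<Sum>j<K. ?w j * ln (?W / ?w j) + ?w j * (real K * e / ?W))"
    using termwise by (intro sum_mono) auto
  also have "\<dots> = surrogate_loss_inf K c + ?W * (real K * e / ?W)"
    by (simp add: sum.distrib surrogate_loss_inf_def surrogate_weight_sum_def sum_distrib_right sum_divide_distrib)
  also have "?W * (real K * e / ?W) \<le> real K * e"
    using surrogate_weight_sum_nonneg[OF c] \<open>0 < e\<close> by (cases "?W = 0") auto
  finally show ?thesis by simp
qed

lemma sq_diff_le_two_sq_gaps:
  fixes a b x y :: real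
  assumes "b \<le> a" "x \<le> y"
  shows "(a - b)\<^sup>2 \<le> 2 * ((a - x)\<^sup>2 + (b - y)\<^sup>2)"
proof -
  have "(a - b)\<^sup>2 \<le> ((a - x) + (y - b))\<^sup>2"
    using assms by (intro power_mono) auto
  also have "\<dots> \<le> 2 * ((a - x)\<^sup>2 + (b - y)\<^sup>2)"
    using zero_le_power2[of "(a - x) - (y - b)"] by (simp add: power2_eq_square algebra_simps)
  finally show ?thesis .
qed

text \<open>Here \<open>c\<^sub>i - c\<^sub>j = w\<^sub>j - w\<^sub>i = (\<surd>w\<^sub>j - \<surd>w\<^sub>i) (\<surd>w\<^sub>j + \<surd>w\<^sub>i)\<close>; as \<open>p\<^sub>j \<le> p\<^sub>i\<close> while
  \<open>w\<^sub>i \<le> w\<^sub>j\<close>, the Hellinger terms of \<open>i\<close> and \<open>j\<close> control the first factor, and \<open>W\<close> the second.\<close>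
lemma cost_gap_sq_le_surrogate_excess:
  assumes "K \<ge> 1" and c: "\<forall>k<K. 0 \<le> c k" and "i < K" "j < K"
    and "v j \<le> v i" and "c j \<le> c i"
  shows "(c i - c j)\<^sup>2 \<le> 8 * surrogate_weight_sum K c * (surrogate_loss K c v - surrogate_loss_inf K c)"
proof -
  let ?w = "surrogate_weight K c" and ?W = "surrogate_weight_sum K c"
  define E where "E = surrogate_loss K c v - surrogate_loss_inf K c"
  define gap where "gap l = (sqrt (?w l) - sqrt (?W * softmax K v l))\<^sup>2" for l
  have "(\<Sum>l<K. gap l) \<le> E"
    using surrogate_excess_ge_hellinger[OF assms(1) c] by (simp add: E_def gap_def)
  moreover have "0 \<le> ?W" by (rule surrogate_weight_sum_nonneg[OF c])
  moreover have "0 \<le> gap l" for l by (simp add: gap_def)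
  ultimately have "0 \<le> E" using sum_nonneg[of "{..<K}" gap] by force
  show ?thesis
  proof (cases "i = j")
    case True
    then show ?thesis using \<open>0 \<le> E\<close> \<open>0 \<le> ?W\<close> by (simp add: E_def)
  next
    case False
    have "gap j + gap i = (\<Sum>l\<in>{j, i}. gap l)" using False by simp
    also have "\<dots> \<le> (\<Sum>l<K. gap l)"
      using \<open>i < K\<close> \<open>j < K\<close> \<open>\<And>l. 0 \<le> gap l\<close> by (intro sum_mono2) auto
    finally have "gap j + gap i \<le> E" using \<open>(\<Sum>l<K. gap l) \<le> E\<close> by simp
    have "softmax K v j \<le> softmax K v i"
      using \<open>v j \<le> v i\<close> unfolding softmax_def by (intro divide_right_mono sum_nonneg) auto
    then have "sqrt (?W * softmax K v j) \<le> sqrt (?W * softmax K v i)"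
      using \<open>0 \<le> ?W\<close> by (intro real_sqrt_le_mono mult_left_mono)
    moreover have "sqrt (?w i) \<le> sqrt (?w j)"
      using \<open>c j \<le> c i\<close> by (simp add: surrogate_weight_def)
    ultimately have "(sqrt (?w j) - sqrt (?w i))\<^sup>2 \<le> 2 * (gap j + gap i)"
      unfolding gap_def by (rule sq_diff_le_two_sq_gaps[rotated])
    then have diff_bound: "(sqrt (?w j) - sqrt (?w i))\<^sup>2 \<le> 2 * E"
      using \<open>gap j + gap i \<le> E\<close> by (smt (verit))
    have sum_bound: "(sqrt (?w j) + sqrt (?w i))\<^sup>2 \<le> 4 * ?W"
    proof -
      have "(sqrt (?w j) + sqrt (?w i))\<^sup>2 \<le> 2 * (?w j + ?w i)"
        using zero_le_power2[of "sqrt (?w j) - sqrt (?w i)"]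
          surrogate_weight_nonneg[OF c] \<open>i < K\<close> \<open>j < K\<close>
        by (simp add: power2_eq_square algebra_simps)
      then show ?thesis
        using surrogate_weight_le_sum[OF c \<open>i < K\<close>] surrogate_weight_le_sum[OF c \<open>j < K\<close>]
        by (smt (verit))
    qed
    have "c i - c j = (sqrt (?w j) - sqrt (?w i)) * (sqrt (?w j) + sqrt (?w i))"
      using surrogate_weight_nonneg[OF c] \<open>i < K\<close> \<open>j < K\<close>
      by (simp add: surrogate_weight_def algebra_simps flip: power2_eq_square)
    then have "(c i - c j)\<^sup>2 = (sqrt (?w j) - sqrt (?w i))\<^sup>2 * (sqrt (?w j) + sqrt (?w i))\<^sup>2"
      by (simp add: power_mult_distrib)
    also have "\<dots> \<le> (2 * E) * (4 * ?W)"
      using diff_bound sum_bound \<open>0 \<le> E\<close> by (intro mult_mono) simp_all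
    also have "\<dots> = 8 * ?W * E" by simp
    finally show ?thesis by (simp only: E_def)
  qed
qed

lemma routed_cost_le_Min_cost:
  assumes "K \<ge> 1" and c: "\<forall>k<K. 0 \<le> c k" and "i < K" and "\<forall>k<K. v k \<le> v i"
    and "surrogate_weight_sum K c \<le> B" and "0 < e"
  shows "c i \<le> Min (c ` {..<K}) + e + 8 * B / e * (surrogate_loss K c v - surrogate_loss_inf K c)"
proof -
  define E where "E = surrogate_loss K c v - surrogate_loss_inf K c"
  have "Min (c ` {..<K}) \<in> c ` {..<K}"
    using \<open>K \<ge> 1\<close> by (intro Min_in) (auto simp: lessThan_empty_iff)
  then obtain j where "j < K" and j_min: "c j = Min (c ` {..<K})" by auto
  have "c j \<le> c i" using \<open>i < K\<close> by (simp add: j_min)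
  have "0 \<le> E" using surrogate_loss_inf_le[OF \<open>K \<ge> 1\<close> c] by (simp add: E_def)
  have "0 \<le> B" using surrogate_weight_sum_nonneg[OF c] \<open>surrogate_weight_sum K c \<le> B\<close> by simp
  have "(c i - c j)\<^sup>2 \<le> 8 * surrogate_weight_sum K c * E"
    unfolding E_def
    using assms \<open>j < K\<close> \<open>c j \<le> c i\<close> by (intro cost_gap_sq_le_surrogate_excess) auto
  also have "\<dots> \<le> 8 * B * E"
    using \<open>surrogate_weight_sum K c \<le> B\<close> \<open>0 \<le> E\<close> by (intro mult_right_mono) auto
  finally have gap_sq: "(c i - c j)\<^sup>2 \<le> 8 * B * E" .
  have "c i - c j \<le> e + 8 * B / e * E"
  proof (cases "c i - c j \<le> e")
    case True
    moreover have "0 \<le> 8 * B / e * E" using \<open>0 \<le> B\<close> \<open>0 \<le> E\<close> \<open>0 < e\<close> by simp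
    ultimately show ?thesis by linarith
  next
    case False
    then have "(c i - c j) * e \<le> (c i - c j)\<^sup>2"
      using \<open>0 < e\<close> unfolding power2_eq_square by (intro mult_left_mono) auto
    then have "(c i - c j) * e \<le> 8 * B * E" using gap_sq by linarith
    then have "c i - c j \<le> 8 * B / e * E" using \<open>0 < e\<close> by (simp add: field_simps)
    then show ?thesis using \<open>0 < e\<close> by simp
  qed
  then show ?thesis by (simp add: j_min E_def)
qed

section \<open>Routers, measurability and risks\<close>

lemma tendsto_ennreal_of_excess_bound:
  fixes R D :: "nat \<Rightarrow> ennreal" and m :: ennreal and k :: "real \<Rightarrow> real"
  assumes lower: "\<And>n. m \<le> R n"
    and upper: "\<And>e n. 0 < e \<Longrightarrow> R n \<le> m + ennreal e + ennreal (k e) * D n"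
    and "D \<longlonglongrightarrow> 0"
  shows "R \<longlonglongrightarrow> m"
proof (rule order_tendstoI)
  fix a assume "a < m"
  then show "eventually (\<lambda>n. a < R n) sequentially"
    using lower by (intro always_eventually allI) (auto intro: less_le_trans)
next
  fix a assume "m < a"
  have "(\<lambda>i. m + ennreal (1 / Suc i)) \<longlonglongrightarrow> m + ennreal 0"
    by (intro tendsto_add tendsto_const tendsto_ennrealI LIMSEQ_Suc[OF lim_const_over_n])
  then have "eventually (\<lambda>i. m + ennreal (1 / Suc i) < a) sequentially"
    using \<open>m < a\<close> by (intro order_tendstoD(2)) simp_all
  then obtain i where i: "m + ennreal (1 / Suc i) < a" by (auto simp: eventually_sequentially)
  define e where "e = 1 / real (Suc i)"
  have "0 < e" by (simp add: e_def)
  have "(\<lambda>n. m + ennreal e + ennreal (k e) * D n) \<longlonglongrightarrow> m + ennreal e + ennreal (k e) * 0"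
    by (intro tendsto_add tendsto_const ennreal_tendsto_cmult \<open>D \<longlonglongrightarrow> 0\<close>) simp
  then have "eventually (\<lambda>n. m + ennreal e + ennreal (k e) * D n < a) sequentially"
    using i by (intro order_tendstoD(2)) (simp_all add: e_def)
  then show "eventually (\<lambda>n. R n < a) sequentially"
    by eventually_elim (rule le_less_trans[OF upper[OF \<open>0 < e\<close>]])
qed

lemma expert_cost_nonneg: "0 \<le> expert_cost L G Ut C j \<omega>"
  by (simp add: expert_cost_def Let_def)

lemma borel_measurable_expert_cost:
  fixes L :: "real^'n \<Rightarrow> real^'n^'n" and G Ut :: "(real^'n) \<times> (real^'n) \<Rightarrow> real^'n"
  assumes [measurable]: "L \<in> borel_measurable borel" "G \<in> borel_measurable borel"
    "Ut \<in> borel_measurable borel" "C j \<in> borel_measurable borel"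
  shows "expert_cost L G Ut C j \<in> borel_measurable borel"
proof -
  have mult_vec: "(\<lambda>p. fst p *v snd p :: real^'n) \<in> borel_measurable (borel :: ((real^'n^'n) \<times> (real^'n)) measure)"
    by (intro borel_measurable_continuous_onI) (simp add: matrix_vector_mult_def continuous_intros)
  have "(fst :: (real^'n) \<times> (real^'n) \<Rightarrow> _) \<in> borel_measurable borel"
    by (intro borel_measurable_continuous_onI continuous_intros)
  from measurable_comp[OF this assms(1)]
  have [measurable]: "(\<lambda>\<omega>::(real^'n) \<times> (real^'n). L (fst \<omega>)) \<in> borel_measurable borel"
    by (simp add: o_def)
  have "(\<lambda>\<omega>. (L (fst \<omega>), G \<omega> - Ut \<omega>)) \<in> borel_measurable borel" by measurable
  from measurable_comp[OF this mult_vec]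
  have [measurable]: "(\<lambda>\<omega>. L (fst \<omega>) *v (G \<omega> - Ut \<omega>)) \<in> borel_measurable borel"
    by (simp add: o_def)
  show ?thesis unfolding expert_cost_def Let_def by measurable
qed

lemma induced_router_argmax:
  assumes "K \<ge> 1" and tb: "\<And>S. S \<noteq> {} \<Longrightarrow> S \<subseteq> {..<K} \<Longrightarrow> tb S \<in> S"
  shows "induced_router tb K g x < K \<and> (\<forall>k<K. g k x \<le> g (induced_router tb K g x) x)"
proof -
  define S where "S = {j. j < K \<and> (\<forall>k<K. g k x \<le> g j x)}"
  have "Max ((\<lambda>j. g j x) ` {..<K}) \<in> (\<lambda>j. g j x) ` {..<K}"
    using \<open>K \<ge> 1\<close> by (intro Max_in) (auto simp: lessThan_empty_iff)
  then obtain j where "j < K" "g j x = Max ((\<lambda>j. g j x) ` {..<K})" by auto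
  then have "j \<in> S" by (simp add: S_def)
  then have "tb S \<in> S" by (intro tb) (auto simp: S_def)
  then show ?thesis by (simp add: induced_router_def S_def)
qed

lemma route_loss_eq_cost: "r < K \<Longrightarrow> route_loss K c r = c r"
  unfolding route_loss_def
  by (simp add: mult.commute[of _ "if _ then _ else _"] if_distrib cong: if_cong)

lemma borel_measurable_surrogate_loss:
  assumes "\<And>j. j < K \<Longrightarrow> f j \<in> borel_measurable N" and "\<And>j. j < K \<Longrightarrow> v j \<in> borel_measurable N"
  shows "(\<lambda>\<omega>. surrogate_loss K (\<lambda>j. f j \<omega>) (\<lambda>j. v j \<omega>)) \<in> borel_measurable N"
proof -
  have "(\<lambda>\<omega>. exp (v j \<omega>)) \<in> borel_measurable N" if "j < K" for j
    using assms(2)[OF that] by measurable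
  then show ?thesis
    unfolding surrogate_loss_def
    by (intro borel_measurable_uminus borel_measurable_sum borel_measurable_times borel_measurable_ln
        borel_measurable_divide borel_measurable_const assms; simp)
qed

lemma borel_measurable_surrogate_loss_inf:
  assumes "\<And>j. j < K \<Longrightarrow> f j \<in> borel_measurable N"
  shows "(\<lambda>\<omega>. surrogate_loss_inf K (\<lambda>j. f j \<omega>)) \<in> borel_measurable N"
  unfolding surrogate_loss_inf_def surrogate_weight_sum_def surrogate_weight_def
  by (intro borel_measurable_sum borel_measurable_times borel_measurable_diff
      borel_measurable_ln borel_measurable_divide assms; simp)

definition sample_of_input :: "'n input \<Rightarrow> (real^'n) \<times> (real^'n)" where
  "sample_of_input x = (fst x, fst (snd x))"

lemma sample_of_input_Pair [simp]: "sample_of_input (fst \<omega>, snd \<omega>, u) = \<omega>"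
  by (simp add: sample_of_input_def)

lemma borel_measurable_sample_of_input: "sample_of_input \<in> borel \<rightarrow>\<^sub>M borel"
  unfolding sample_of_input_def by (intro borel_measurable_continuous_onI continuous_intros)

locale routing_costs = prob_space M
  for M :: "((real^'n) \<times> (real^'n)) measure" +
  fixes K :: nat and c :: "nat \<Rightarrow> (real^'n) \<times> (real^'n) \<Rightarrow> real"
  assumes K_ge_1: "K \<ge> 1"
    and sets_M: "sets M = sets borel"
    and cost_measurable: "\<And>j. j < K \<Longrightarrow> c j \<in> borel_measurable borel"
    and cost_nonneg: "\<And>j \<omega>. 0 \<le> c j \<omega>"
begin

abbreviation bayes_cost :: "(real^'n) \<times> (real^'n) \<Rightarrow> real" where
  "bayes_cost \<omega> \<equiv> Min ((\<lambda>j. c j \<omega>) ` {..<K})"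

abbreviation bayes_surrogate :: "(real^'n) \<times> (real^'n) \<Rightarrow> real" where
  "bayes_surrogate \<omega> \<equiv> surrogate_loss_inf K (\<lambda>j. c j \<omega>)"

abbreviation surrogate_excess ::
  "((real^'n) \<times> (real^'n) \<Rightarrow> real^'n) \<Rightarrow> (nat \<Rightarrow> 'n input \<Rightarrow> real) \<Rightarrow> (real^'n) \<times> (real^'n) \<Rightarrow> real"
where
  "surrogate_excess Ut g \<omega> \<equiv>
     surrogate_loss K (\<lambda>j. c j \<omega>) (\<lambda>j. g j (fst \<omega>, snd \<omega>, Ut \<omega>)) - bayes_surrogate \<omega>"

lemma measurable_M: "M \<rightarrow>\<^sub>M N = borel \<rightarrow>\<^sub>M N"
  by (rule measurable_cong_sets[OF sets_M refl])

lemma costs_nonneg: "\<forall>j<K. 0 \<le> c j \<omega>"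
  using cost_nonneg by simp

lemma borel_measurable_bayes_cost: "bayes_cost \<in> borel_measurable borel"
  by (rule borel_measurable_Min) (auto intro: cost_measurable)

lemma borel_measurable_bayes_surrogate: "bayes_surrogate \<in> borel_measurable borel"
  by (rule borel_measurable_surrogate_loss_inf) (rule cost_measurable)

lemma borel_measurable_surrogate_excess:
  assumes "Ut \<in> borel_measurable borel" and "\<And>j. j < K \<Longrightarrow> g j \<in> borel_measurable borel"
  shows "surrogate_excess Ut g \<in> borel_measurable borel"
proof -
  have "(\<lambda>\<omega>. (fst \<omega>, snd \<omega>, Ut \<omega>)) \<in> borel \<rightarrow>\<^sub>M (borel :: 'n input measure)"
    by (intro borel_measurable_Pair borel_measurable_continuous_onI continuous_intros assms(1))
  then have "(\<lambda>\<omega>. g j (fst \<omega>, snd \<omega>, Ut \<omega>)) \<in> borel_measurable borel" if "j < K" for j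
    using measurable_comp assms(2)[OF that] by (auto simp: o_def)
  then show ?thesis
    by (intro borel_measurable_diff borel_measurable_surrogate_loss borel_measurable_bayes_surrogate
        cost_measurable)
qed

lemma bayes_cost_attained: "\<exists>j<K. c j \<omega> = bayes_cost \<omega>"
proof -
  have "bayes_cost \<omega> \<in> (\<lambda>j. c j \<omega>) ` {..<K}"
    using K_ge_1 by (intro Min_in) (auto simp: lessThan_empty_iff)
  then show ?thesis by auto
qed

lemma bayes_cost_nonneg: "0 \<le> bayes_cost \<omega>"
  using bayes_cost_attained[of \<omega>] cost_nonneg by metis

lemma surrogate_excess_nonneg: "0 \<le> surrogate_excess Ut g \<omega>"
  using surrogate_loss_inf_le[OF K_ge_1 costs_nonneg] by simp

lemma route_risk_ge_bayes:
  assumes "\<forall>x. r x < K"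
  shows "(\<integral>\<^sup>+\<omega>. ennreal (bayes_cost \<omega>) \<partial>M) \<le> route_risk M K c Ut r"
  unfolding route_risk_def
  by (intro nn_integral_mono ennreal_leI) (simp add: route_loss_eq_cost assms)

lemma borel_measurable_cost_sample_of_input:
  "j < K \<Longrightarrow> (\<lambda>x. c j (sample_of_input x)) \<in> borel_measurable borel"
  using measurable_comp[OF borel_measurable_sample_of_input cost_measurable] by (simp add: o_def)

lemma route_risk_star_eq: "route_risk_star M K c Ut = (\<integral>\<^sup>+\<omega>. ennreal (bayes_cost \<omega>) \<partial>M)"
proof (rule antisym)
  define r where
    "r x = (LEAST j. j < K \<and> c j (sample_of_input x) \<le> bayes_cost (sample_of_input x))" for x
  have r: "r x < K \<and> c (r x) (sample_of_input x) = bayes_cost (sample_of_input x)" for x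
  proof -
    obtain j where j: "j < K" "c j (sample_of_input x) = bayes_cost (sample_of_input x)"
      using bayes_cost_attained by blast
    have "r x < K \<and> c (r x) (sample_of_input x) \<le> bayes_cost (sample_of_input x)"
      unfolding r_def by (rule LeastI[of _ j]) (simp add: j)
    moreover from this have "bayes_cost (sample_of_input x) \<le> c (r x) (sample_of_input x)"
      by (intro Min_le) auto
    ultimately show ?thesis by simp
  qed
  have [measurable]: "(\<lambda>x. bayes_cost (sample_of_input x)) \<in> borel_measurable borel"
    using measurable_comp[OF borel_measurable_sample_of_input borel_measurable_bayes_cost]
    by (simp add: o_def)
  have "r \<in> borel \<rightarrow>\<^sub>M count_space UNIV"
    unfolding r_def
  proof (rule measurable_Least)
    fix j
    show "(\<lambda>x. j < K \<and> c j (sample_of_input x) \<le> bayes_cost (sample_of_input x))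
      \<in> borel \<rightarrow>\<^sub>M count_space UNIV"
    proof (cases "j < K")
      case True
      note [measurable] = borel_measurable_cost_sample_of_input[OF True]
      show ?thesis by measurable
    qed simp
  qed
  then have "route_risk_star M K c Ut \<le> route_risk M K c Ut r"
    unfolding route_risk_star_def using r by (intro INF_lower) auto
  also have "\<dots> = (\<integral>\<^sup>+\<omega>. ennreal (bayes_cost \<omega>) \<partial>M)"
    unfolding route_risk_def
    using r[of "(fst \<omega>, snd \<omega>, Ut \<omega>)" for \<omega>] by (simp add: route_loss_eq_cost)
  finally show "route_risk_star M K c Ut \<le> (\<integral>\<^sup>+\<omega>. ennreal (bayes_cost \<omega>) \<partial>M)" .
next
  show "(\<integral>\<^sup>+\<omega>. ennreal (bayes_cost \<omega>) \<partial>M) \<le> route_risk_star M K c Ut"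
    unfolding route_risk_star_def by (intro INF_greatest route_risk_ge_bayes) simp
qed

lemma surrogate_risk_star_eq:
  "surrogate_risk_star M K c Ut = (\<integral>\<^sup>+\<omega>. ennreal (bayes_surrogate \<omega>) \<partial>M)"
proof (rule antisym)
  show "surrogate_risk_star M K c Ut \<le> (\<integral>\<^sup>+\<omega>. ennreal (bayes_surrogate \<omega>) \<partial>M)"
  proof (rule ennreal_le_epsilon)
    fix e :: real assume "0 < e"
    define g where
      "g j x = ln (surrogate_weight K (\<lambda>k. c k (sample_of_input x)) j + e / K)" for j x
    have "g j \<in> borel_measurable borel" if "j < K" for j
      unfolding g_def surrogate_weight_def
      by (intro borel_measurable_ln borel_measurable_add borel_measurable_diff borel_measurable_sum
          borel_measurable_const borel_measurable_cost_sample_of_input that; simp)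
    then have "surrogate_risk_star M K c Ut \<le> surrogate_risk M K c Ut g"
      unfolding surrogate_risk_star_def by (intro INF_lower) auto
    also have "\<dots> \<le> (\<integral>\<^sup>+\<omega>. ennreal (bayes_surrogate \<omega>) + ennreal e \<partial>M)"
      unfolding surrogate_risk_def
    proof (intro nn_integral_mono)
      fix \<omega>
      have "surrogate_loss K (\<lambda>j. c j \<omega>) (\<lambda>j. g j (fst \<omega>, snd \<omega>, Ut \<omega>)) \<le> bayes_surrogate \<omega> + real K * (e / K)"
        using surrogate_loss_ln_weight_le[OF K_ge_1 costs_nonneg, of "e / K"] \<open>0 < e\<close> K_ge_1
        by (simp add: g_def)
      then have "ennreal (surrogate_loss K (\<lambda>j. c j \<omega>) (\<lambda>j. g j (fst \<omega>, snd \<omega>, Ut \<omega>)))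
          \<le> ennreal (bayes_surrogate \<omega> + e)"
        using K_ge_1 by (intro ennreal_leI) simp
      also have "\<dots> = ennreal (bayes_surrogate \<omega>) + ennreal e"
        using \<open>0 < e\<close> surrogate_loss_inf_nonneg[OF costs_nonneg] by (intro ennreal_plus) auto
      finally show "ennreal (surrogate_loss K (\<lambda>j. c j \<omega>) (\<lambda>j. g j (fst \<omega>, snd \<omega>, Ut \<omega>)))
          \<le> ennreal (bayes_surrogate \<omega>) + ennreal e" .
    qed
    also have "\<dots> = (\<integral>\<^sup>+\<omega>. ennreal (bayes_surrogate \<omega>) \<partial>M) + ennreal e"
      using borel_measurable_bayes_surrogate
      by (simp add: nn_integral_add measurable_M emeasure_space_1)
    finally show "surrogate_risk_star M K c Ut \<le> (\<integral>\<^sup>+\<omega>. ennreal (bayes_surrogate \<omega>) \<partial>M) + ennreal e" .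
  qed
next
  show "(\<integral>\<^sup>+\<omega>. ennreal (bayes_surrogate \<omega>) \<partial>M) \<le> surrogate_risk_star M K c Ut"
    unfolding surrogate_risk_star_def surrogate_risk_def
    by (intro INF_greatest nn_integral_mono ennreal_leI surrogate_loss_inf_le K_ge_1 costs_nonneg)
qed

lemma surrogate_risk_eq_excess_add:
  assumes "Ut \<in> borel_measurable borel" and "\<And>j. j < K \<Longrightarrow> g j \<in> borel_measurable borel"
  shows "surrogate_risk M K c Ut g =
    (\<integral>\<^sup>+\<omega>. ennreal (surrogate_excess Ut g \<omega>) \<partial>M) + (\<integral>\<^sup>+\<omega>. ennreal (bayes_surrogate \<omega>) \<partial>M)"
proof -
  have "surrogate_risk M K c Ut g =
      (\<integral>\<^sup>+\<omega>. ennreal (surrogate_excess Ut g \<omega>) + ennreal (bayes_surrogate \<omega>) \<partial>M)"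
    unfolding surrogate_risk_def
    using surrogate_loss_inf_le[OF K_ge_1 costs_nonneg] surrogate_loss_inf_nonneg[OF costs_nonneg]
    by (intro nn_integral_cong) (simp add: ennreal_plus[symmetric])
  also have "\<dots> = (\<integral>\<^sup>+\<omega>. ennreal (surrogate_excess Ut g \<omega>) \<partial>M) + (\<integral>\<^sup>+\<omega>. ennreal (bayes_surrogate \<omega>) \<partial>M)"
    using borel_measurable_surrogate_excess[OF assms] borel_measurable_bayes_surrogate
    by (intro nn_integral_add) (simp_all add: measurable_M)
  finally show ?thesis .
qed

lemma nn_integral_bayes_surrogate_finite:
  assumes "AE \<omega> in M. \<forall>j<K. c j \<omega> < E"
  shows "(\<integral>\<^sup>+\<omega>. ennreal (bayes_surrogate \<omega>) \<partial>M) < \<infinity>"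
proof -
  have "(\<integral>\<^sup>+\<omega>. ennreal (bayes_surrogate \<omega>) \<partial>M) \<le> (\<integral>\<^sup>+\<omega>. ennreal (real K * (real K * E) * ln K) \<partial>M)"
    using assms
  proof (intro nn_integral_mono_AE, eventually_elim)
    fix \<omega> assume "\<forall>j<K. c j \<omega> < E"
    have "bayes_surrogate \<omega> \<le> surrogate_loss K (\<lambda>j. c j \<omega>) (\<lambda>_. 0)"
      by (rule surrogate_loss_inf_le[OF K_ge_1 costs_nonneg])
    also have "\<dots> = surrogate_weight_sum K (\<lambda>j. c j \<omega>) * ln K"
      using K_ge_1
      by (simp add: surrogate_loss_eq softmax_def surrogate_weight_sum_def ln_div sum_distrib_right sum_negf)
    also have "\<dots> \<le> real K * (real K * E) * ln K"
      using \<open>\<forall>j<K. c j \<omega> < E\<close> K_ge_1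
      by (intro mult_right_mono surrogate_weight_sum_le costs_nonneg) (auto intro: less_imp_le)
    finally have "bayes_surrogate \<omega> \<le> real K * (real K * E) * ln K" .
    then show "ennreal (bayes_surrogate \<omega>) \<le> ennreal (real K * (real K * E) * ln K)"
      by (rule ennreal_leI)
  qed
  also have "\<dots> < \<infinity>" by (simp add: emeasure_space_1)
  finally show ?thesis .
qed

lemma route_risk_induced_router_le:
  assumes "AE \<omega> in M. \<forall>j<K. c j \<omega> < E"
    and "Ut \<in> borel_measurable borel" and "\<And>j. j < K \<Longrightarrow> g j \<in> borel_measurable borel"
    and tb: "\<And>S. S \<noteq> {} \<Longrightarrow> S \<subseteq> {..<K} \<Longrightarrow> tb S \<in> S"
    and "0 < e"
  defines "B \<equiv> real K * (real K * E)"
  shows "route_risk M K c Ut (induced_router tb K g) \<le>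
    (\<integral>\<^sup>+\<omega>. ennreal (bayes_cost \<omega>) \<partial>M) + ennreal e +
    ennreal (8 * B / e) * (\<integral>\<^sup>+\<omega>. ennreal (surrogate_excess Ut g \<omega>) \<partial>M)"
proof -
  have "route_risk M K c Ut (induced_router tb K g) \<le>
      (\<integral>\<^sup>+\<omega>. ennreal (bayes_cost \<omega>) + ennreal e + ennreal (8 * B / e) * ennreal (surrogate_excess Ut g \<omega>) \<partial>M)"
    unfolding route_risk_def using assms(1)
  proof (intro nn_integral_mono_AE, eventually_elim)
    fix \<omega> assume bounded: "\<forall>j<K. c j \<omega> < E"
    define i where "i = induced_router tb K g (fst \<omega>, snd \<omega>, Ut \<omega>)"
    have i: "i < K \<and> (\<forall>k<K. g k (fst \<omega>, snd \<omega>, Ut \<omega>) \<le> g i (fst \<omega>, snd \<omega>, Ut \<omega>))"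
      unfolding i_def by (rule induced_router_argmax[OF K_ge_1 tb])
    have "0 \<le> E" using bounded K_ge_1 cost_nonneg[of 0 \<omega>] by force
    have "surrogate_weight_sum K (\<lambda>j. c j \<omega>) \<le> B"
      unfolding B_def using bounded by (intro surrogate_weight_sum_le costs_nonneg) (auto intro: less_imp_le)
    then have "c i \<omega> \<le> bayes_cost \<omega> + e + 8 * B / e * surrogate_excess Ut g \<omega>"
      using i \<open>0 < e\<close> by (intro routed_cost_le_Min_cost[OF K_ge_1 costs_nonneg]) auto
    moreover have "0 \<le> B" using \<open>0 \<le> E\<close> by (simp add: B_def)
    ultimately have "ennreal (c i \<omega>)
        \<le> ennreal (bayes_cost \<omega>) + ennreal e + ennreal (8 * B / e) * ennreal (surrogate_excess Ut g \<omega>)"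
      using \<open>0 < e\<close> bayes_cost_nonneg[of \<omega>] surrogate_excess_nonneg[where Ut = Ut and g = g and \<omega> = \<omega>]
      by (simp add: ennreal_leI flip: ennreal_plus ennreal_mult)
    then show "ennreal (route_loss K (\<lambda>j. c j \<omega>) (induced_router tb K g (fst \<omega>, snd \<omega>, Ut \<omega>)))
        \<le> ennreal (bayes_cost \<omega>) + ennreal e + ennreal (8 * B / e) * ennreal (surrogate_excess Ut g \<omega>)"
      using i by (simp only: route_loss_eq_cost flip: i_def)
  qed
  also have "\<dots> = (\<integral>\<^sup>+\<omega>. ennreal (bayes_cost \<omega>) + ennreal e \<partial>M) +
      (\<integral>\<^sup>+\<omega>. ennreal (8 * B / e) * ennreal (surrogate_excess Ut g \<omega>) \<partial>M)"
    using borel_measurable_bayes_cost borel_measurable_surrogate_excess[OF assms(2,3)]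
    by (intro nn_integral_add) (simp_all add: measurable_M)
  also have "\<dots> = (\<integral>\<^sup>+\<omega>. ennreal (bayes_cost \<omega>) \<partial>M) + ennreal e +
      ennreal (8 * B / e) * (\<integral>\<^sup>+\<omega>. ennreal (surrogate_excess Ut g \<omega>) \<partial>M)"
    using borel_measurable_bayes_cost borel_measurable_surrogate_excess[OF assms(2,3)]
    by (simp add: nn_integral_add nn_integral_cmult emeasure_space_1 measurable_M)
  finally show ?thesis .
qed

theorem route_risk_tendsto_of_surrogate_risk_tendsto:
  assumes "AE \<omega> in M. \<forall>j<K. c j \<omega> < E"
    and "Ut \<in> borel_measurable borel"
    and "\<And>S. S \<noteq> {} \<Longrightarrow> S \<subseteq> {..<K} \<Longrightarrow> tb S \<in> S"
    and gs: "\<And>n j. j < K \<Longrightarrow> gs n j \<in> borel_measurable borel"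
    and "(\<lambda>n. surrogate_risk M K c Ut (gs n)) \<longlonglongrightarrow> surrogate_risk_star M K c Ut"
  shows "(\<lambda>n. route_risk M K c Ut (induced_router tb K (gs n))) \<longlonglongrightarrow> route_risk_star M K c Ut"
proof -
  define h where "h = (\<integral>\<^sup>+\<omega>. ennreal (bayes_surrogate \<omega>) \<partial>M)"
  define D where "D n = (\<integral>\<^sup>+\<omega>. ennreal (surrogate_excess Ut (gs n) \<omega>) \<partial>M)" for n
  have "h \<noteq> \<infinity>" using nn_integral_bayes_surrogate_finite[OF assms(1)] by (simp add: h_def)
  have "(\<lambda>n. D n + h) \<longlonglongrightarrow> 0 + h"
    using assms(5) surrogate_risk_eq_excess_add[OF assms(2) gs]
    by (simp add: surrogate_risk_star_eq D_def h_def)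
  then have "(\<lambda>n. D n + h - h) \<longlonglongrightarrow> 0 + h - h"
    using \<open>h \<noteq> \<infinity>\<close> by (intro tendsto_diff_ennreal tendsto_const) auto
  then have "D \<longlonglongrightarrow> 0"
    using \<open>h \<noteq> \<infinity>\<close> by simp
  show ?thesis
    unfolding route_risk_star_eq
  proof (rule tendsto_ennreal_of_excess_bound[where D = D and k = "\<lambda>e. 8 * (real K * (real K * E)) / e"])
    show "(\<integral>\<^sup>+\<omega>. ennreal (bayes_cost \<omega>) \<partial>M) \<le> route_risk M K c Ut (induced_router tb K (gs n))" for n
      by (intro route_risk_ge_bayes allI conjunct1[OF induced_router_argmax[OF K_ge_1 assms(3)]])
    show "route_risk M K c Ut (induced_router tb K (gs n)) \<le> (\<integral>\<^sup>+\<omega>. ennreal (bayes_cost \<omega>) \<partial>M)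
        + ennreal e + ennreal (8 * (real K * (real K * E)) / e) * D n" if "0 < e" for e n
      unfolding D_def by (rule route_risk_induced_router_le[OF assms(1,2) gs assms(3) that])
  qed fact
qed

end

theorem theorem2:
  fixes M :: "((real^'n) \<times> (real^'n)) measure"
    and K :: nat
    and L :: "real^'n \<Rightarrow> real^'n^'n"
    and G Ut :: "(real^'n) \<times> (real^'n) \<Rightarrow> real^'n"
    and C :: "nat \<Rightarrow> real^'n \<Rightarrow> real^'n"
    and tb :: "nat set \<Rightarrow> nat"
    and E_min E_bar :: real
  assumes "K \<ge> 1"
    and "prob_space M"
    and "sets M = sets borel"
    and "L \<in> borel_measurable borel"
    and "G \<in> borel_measurable borel"
    and "Ut \<in> borel_measurable borel"
    and "\<And>j. j < K \<Longrightarrow> C j \<in> borel_measurable borel"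
    and "\<And>S. S \<noteq> {} \<Longrightarrow> S \<subseteq> {..<K} \<Longrightarrow> tb S \<in> S"
    and "0 < E_min"
    and "AE \<omega> in M. (\<forall>j<K. expert_cost L G Ut C j \<omega> < E_bar) \<and>
                     (\<exists>j<K. expert_cost L G Ut C j \<omega> > E_min)"
  shows "\<forall>gs :: nat \<Rightarrow> nat \<Rightarrow> 'n input \<Rightarrow> real.
           (\<forall>n j. j < K \<longrightarrow> gs n j \<in> borel_measurable borel) \<longrightarrow>
           (\<lambda>n. surrogate_risk M K (expert_cost L G Ut C) Ut (gs n))
              \<longlonglongrightarrow> surrogate_risk_star M K (expert_cost L G Ut C) Ut \<longrightarrow>
           (\<lambda>n. route_risk M K (expert_cost L G Ut C) Ut (induced_router tb K (gs n)))
              \<longlonglongrightarrow> route_risk_star M K (expert_cost L G Ut C) Ut"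
proof (intro allI impI)
  fix gs :: "nat \<Rightarrow> nat \<Rightarrow> 'n input \<Rightarrow> real"
  assume gs: "\<forall>n j. j < K \<longrightarrow> gs n j \<in> borel_measurable borel"
    and surrogate_tendsto: "(\<lambda>n. surrogate_risk M K (expert_cost L G Ut C) Ut (gs n))
      \<longlonglongrightarrow> surrogate_risk_star M K (expert_cost L G Ut C) Ut"
  interpret routing_costs M K "expert_cost L G Ut C"
    using assms(1-3) borel_measurable_expert_cost[OF assms(4-6) assms(7)]
    by (intro routing_costs.intro routing_costs_axioms.intro expert_cost_nonneg)
  have "AE \<omega> in M. \<forall>j<K. expert_cost L G Ut C j \<omega> < E_bar"
    using assms(10) by eventually_elim simp
  then show "(\<lambda>n. route_risk M K (expert_cost L G Ut C) Ut (induced_router tb K (gs n)))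
      \<longlonglongrightarrow> route_risk_star M K (expert_cost L G Ut C) Ut"
    using gs surrogate_tendsto
    by (intro route_risk_tendsto_of_surrogate_risk_tendsto[OF _ assms(6,8)]) auto
qed

end
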